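(* Let $\{E^A_{\alpha,k}\}$ be an informationally complete $(N_A,M_A)$ POVM on $\mathbb{C}^{d_A}$ with parameter $x_A$ and $\{E^B_{\beta,j}\}$ an informationally complete $(N_B,M_B)$ POVM on $\mathbb{C}^{d_B}$ with parameter $x_B$. For every separable state $\rho_{AB}$ on $\mathbb{C}^{d_A}\otimes\mathbb{C}^{d_B}$, $$\sum_{\alpha=1}^{N_A}\sum_{k=1}^{M_A}\sum_{\beta=1}^{N_B}\sum_{j=1}^{M_B}\mathrm{tr}\big[(E^A_{\alpha,k}\otimes E^B_{\beta,j})\rho_{AB}\big]^2\le\frac{(d_A-1)(d_A^2+M_A^2x_A)}{d_AM_A(M_A-1)}\cdot\frac{(d_B-1)(d_B^2+M_B^2x_B)}{d_BM_B(M_B-1)}.$$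
   Context: An $(N,M)$ POVM on $\mathbb{C}^d$ (with $M\ge 2$) consists of $N$ POVMs $\{E_{\alpha,k}\mid k=1,\dots,M\}$, $\alpha=1,\dots,N$, satisfying $\mathrm{tr}(E_{\alpha,k})=d/M$, $\mathrm{tr}(E_{\alpha,k}^2)=x$, $\mathrm{tr}(E_{\alpha,k}E_{\alpha,l})=\frac{d-Mx}{M(M-1)}$ for $l\ne k$, and $\mathrm{tr}(E_{\alpha,k}E_{\beta,l})=d/M^2$ for $\beta\ne\alpha$, where $\frac{d}{M^2}<x\le\min\{\frac{d^2}{M^2},\frac dM\}$; it is informationally complete if $N(M-1)=d^2-1$. A state is separable if it is a convex combination of product states $\rho_A^i\otimes\rho_B^i$. *)

theory Defs
  imports "HOL-Analysis.Analysis"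
begin

definition hermitian :: "complex^'n::finite^'n \<Rightarrow> bool" where
  "hermitian A \<longleftrightarrow> (\<forall>i j. A $ i $ j = cnj (A $ j $ i))"

definition psd :: "complex^'n::finite^'n \<Rightarrow> bool" where
  "psd A \<longleftrightarrow> hermitian A \<and>
     (\<forall>v :: complex^'n. let q = (\<Sum>i\<in>UNIV. \<Sum>j\<in>UNIV. cnj (v $ i) * A $ i $ j * v $ j)
                        in Im q = 0 \<and> Re q \<ge> 0)"

definition density :: "complex^'n::finite^'n \<Rightarrow> bool" where
  "density \<rho> \<longleftrightarrow> psd \<rho> \<and> trace \<rho> = 1"

definition kron :: "complex^'n::finite^'n \<Rightarrow> complex^'m::finite^'m \<Rightarrow> complex^('n::finite \<times> 'm::finite)^('n \<times> 'm)" where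
  "kron A B = (\<chi> p q. A $ fst p $ fst q * B $ snd p $ snd q)"

definition separable :: "complex^('n::finite \<times> 'm::finite)^('n \<times> 'm) \<Rightarrow> bool" where
  "separable \<rho> \<longleftrightarrow> (\<exists>(r::nat) (p::nat \<Rightarrow> real) \<rho>A \<rho>B.
      (\<forall>i<r. p i \<ge> 0 \<and> density (\<rho>A i) \<and> density (\<rho>B i)) \<and>
      (\<Sum>i<r. p i) = 1 \<and>
      \<rho> = (\<Sum>i<r. (\<chi> u v. complex_of_real (p i) * kron (\<rho>A i) (\<rho>B i) $ u $ v)))"

text \<open>(N,M) POVM on C^d, d = CARD('n), with parameter x; indices alpha < N, k < M (0-based).\<close>
definition NM_POVM :: "nat \<Rightarrow> nat \<Rightarrow> real \<Rightarrow> (nat \<Rightarrow> nat \<Rightarrow> complex^'n::finite^'n) \<Rightarrow> bool" where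
  "NM_POVM N M x E \<longleftrightarrow>
     (let d = real CARD('n) in
      M \<ge> 2 \<and>
      d / real M ^ 2 < x \<and> x \<le> min (d ^ 2 / real M ^ 2) (d / real M) \<and>
      (\<forall>a<N. \<forall>k<M. psd (E a k)) \<and>
      (\<forall>a<N. (\<Sum>k<M. E a k) = mat 1) \<and>
      (\<forall>a<N. \<forall>k<M. trace (E a k) = complex_of_real (d / real M)) \<and>
      (\<forall>a<N. \<forall>k<M. trace (E a k ** E a k) = complex_of_real x) \<and>
      (\<forall>a<N. \<forall>k<M. \<forall>l<M. l \<noteq> k \<longrightarrow>
          trace (E a k ** E a l) = complex_of_real ((d - real M * x) / (real M * (real M - 1)))) \<and>
      (\<forall>a<N. \<forall>b<N. \<forall>k<M. \<forall>l<M. b \<noteq> a \<longrightarrow>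
          trace (E a k ** E b l) = complex_of_real (d / real M ^ 2)))"

definition IC_NM_POVM :: "nat \<Rightarrow> nat \<Rightarrow> real \<Rightarrow> (nat \<Rightarrow> nat \<Rightarrow> complex^'n::finite^'n) \<Rightarrow> bool" where
  "IC_NM_POVM N M x E \<longleftrightarrow> NM_POVM N M x E \<and> N * (M - 1) = CARD('n) ^ 2 - 1"

end

(*
  For a single (N,M)-POVM the centred effects E(a,k) - I/M have a block Gram matrix:
  different blocks a are orthogonal, and inside a block it is (c - c') Id + c' J with
  c - c' = (M^2 x - d) / (M (M - 1)). As every block of centred effects sums to zero, a
  Bessel-type inequality bounds the sum of (tr (E(a,k) rho) - 1/M)^2 by c - c' times the
  squared Hilbert-Schmidt norm of the traceless part of rho, which is tr rho^2 - 1/d <= 1 - 1/d.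
  Restoring the means and using N (M - 1) = d^2 - 1 gives the bound for one system.
  For a separable state each tr ((E(a,k) (x) F(b,j)) rho) is a convex combination of products
  of single-system probabilities, so convexity of the square bounds the sum over all four
  indices by the product of the two single-system bounds.
*)
theory Submission
  imports Defs
begin

lemma psd_imp_hermitian: "psd A \<Longrightarrow> hermitian A"
  by (simp add: psd_def)

lemma hermitian_cnj_entry: "hermitian A \<Longrightarrow> cnj (A $ i $ j) = A $ j $ i"
  unfolding hermitian_def by (metis complex_cnj_cnj)

lemma hermitian_mat1: "hermitian (mat 1 :: complex^'n::finite^'n)"
  by (simp add: hermitian_def mat_def)

lemma hermitian_inner_eq_Re_trace:
  fixes A B :: "complex^'n::finite^'n"
  assumes "hermitian A"
  shows "inner A B = Re (trace (A ** B))"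
proof -
  have "Re (trace (A ** B)) = (\<Sum>i\<in>UNIV. \<Sum>j\<in>UNIV. Re (A$i$j * B$j$i))"
    by (simp add: trace_def matrix_matrix_mult_def)
  also have "\<dots> = (\<Sum>i\<in>UNIV. \<Sum>j\<in>UNIV. inner (A$j$i) (B$j$i))"
  proof (intro sum.cong refl)
    fix i j
    have "A $ i $ j = cnj (A $ j $ i)"
      using hermitian_cnj_entry[OF assms] by simp
    then show "Re (A$i$j * B$j$i) = inner (A$j$i) (B$j$i)"
      by (simp add: inner_complex_def)
  qed
  also have "\<dots> = inner A B"
    by (subst sum.swap) (simp add: inner_vec_def)
  finally show ?thesis by simp
qed

lemma hermitian_trace_mult_eq_inner:
  fixes A B :: "complex^'n::finite^'n"
  assumes "hermitian A" "hermitian B"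
  shows "trace (A ** B) = complex_of_real (inner A B)"
proof -
  have "cnj (trace (A ** B)) = (\<Sum>i\<in>UNIV. \<Sum>j\<in>UNIV. cnj (A$i$j) * cnj (B$j$i))"
    by (simp add: trace_def matrix_matrix_mult_def)
  also have "\<dots> = trace (B ** A)"
    using assms by (simp add: trace_def matrix_matrix_mult_def hermitian_cnj_entry mult.commute)
  also have "\<dots> = trace (A ** B)"
    by (rule trace_mul_sym)
  finally have "Im (trace (A ** B)) = 0"
    by (metis Reals_cnj_iff complex_is_Real_iff)
  then show ?thesis
    using hermitian_inner_eq_Re_trace[OF assms(1)] by (simp add: complex_eq_iff)
qed

lemma inner_mat1_left:
  fixes B :: "complex^'n::finite^'n"
  shows "inner (mat 1) B = Re (trace B)"
  by (simp add: hermitian_inner_eq_Re_trace[OF hermitian_mat1])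

lemma inner_mat1_mat1: "inner (mat 1 :: complex^'n::finite^'n) (mat 1) = real CARD('n)"
  by (simp add: inner_mat1_left trace_I)

lemma density_inner_mat1: "density \<rho> \<Longrightarrow> inner (mat 1) \<rho> = 1"
  by (simp add: inner_mat1_left density_def)

lemma quadratic_nonneg_imp_discriminant_le:
  fixes a b c :: real
  assumes nonneg: "\<And>t. 0 \<le> a * t^2 - 2 * b * t + c" and "0 \<le> a"
  shows "b^2 \<le> a * c"
proof (cases "a = 0")
  case True
  have "b = 0"
  proof (rule ccontr)
    assume "b \<noteq> 0"
    then have "a * ((c + 1) / (2 * b))^2 - 2 * b * ((c + 1) / (2 * b)) + c = -1"
      using True by (simp add: field_simps)
    then show False using nonneg[of "(c + 1) / (2 * b)"] by simp
  qed
  then show ?thesis using True by simp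
next
  case False
  then have "a > 0" using assms(2) by simp
  have "0 \<le> a * (b / a)^2 - 2 * b * (b / a) + c" by (rule nonneg)
  also have "\<dots> = (a * c - b^2) / a" using \<open>a > 0\<close> by (simp add: field_simps power2_eq_square)
  finally show ?thesis using \<open>a > 0\<close> by (simp add: zero_le_divide_iff)
qed

lemma psd_quadratic_form_nonneg:
  fixes A :: "complex^'n::finite^'n"
  assumes "psd A"
  shows "0 \<le> Re (\<Sum>i\<in>UNIV. \<Sum>j\<in>UNIV. cnj (v $ i) * A $ i $ j * v $ j)"
  using assms unfolding psd_def Let_def by blast

lemma Im_psd_diag:
  fixes A :: "complex^'n::finite^'n"
  assumes "psd A"
  shows "Im (A $ i $ i) = 0"
  using hermitian_cnj_entry[OF psd_imp_hermitian[OF assms], of i i]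
  by (metis Reals_cnj_iff complex_is_Real_iff)

lemma Re_psd_diag_nonneg:
  fixes A :: "complex^'n::finite^'n"
  assumes "psd A"
  shows "0 \<le> Re (A $ i $ i)"
proof -
  have "(\<Sum>k\<in>UNIV. \<Sum>l\<in>UNIV. cnj (axis i 1 $ k) * A $ k $ l * axis i 1 $ l) = A $ i $ i"
    by (simp add: axis_def if_distrib[of "\<lambda>z. z * _"] if_distrib[of "\<lambda>z. _ * z"]
        if_distrib[of cnj] cong: if_cong)
  then show ?thesis using psd_quadratic_form_nonneg[OF assms, of "axis i 1"] by simp
qed

lemma psd_offdiag_norm_square_le:
  fixes A :: "complex^'n::finite^'n"
  assumes "psd A" "i \<noteq> j"
  shows "(cmod (A $ i $ j))^2 \<le> Re (A $ i $ i) * Re (A $ j $ j)"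
proof -
  define w where "w = A $ i $ j"
  have hji: "A $ j $ i = cnj w"
    using hermitian_cnj_entry[OF psd_imp_hermitian[OF assms(1)], of i j] by (simp add: w_def)
  have two_support: "sum f UNIV = f i + f j"
    if "\<And>k. k \<noteq> i \<Longrightarrow> k \<noteq> j \<Longrightarrow> f k = 0" for f :: "'n \<Rightarrow> complex"
  proof -
    have "sum f UNIV = sum f {i, j}"
      by (rule sum.mono_neutral_right) (use that in auto)
    then show ?thesis using assms(2) by simp
  qed
  have "0 \<le> Re (A $ i $ i) * t^2 - 2 * (cmod w)^2 * t + (cmod w)^2 * Re (A $ j $ j)" for t :: real
  proof -
    define v :: "complex^'n"
      where "v = (\<chi> k. if k = i then complex_of_real t else if k = j then - cnj w else 0)"
    have "(\<Sum>k\<in>UNIV. \<Sum>l\<in>UNIV. cnj (v $ k) * A $ k $ l * v $ l)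
        = cnj (v $ i) * A $ i $ i * v $ i + cnj (v $ i) * A $ i $ j * v $ j
          + (cnj (v $ j) * A $ j $ i * v $ i + cnj (v $ j) * A $ j $ j * v $ j)"
      by (simp add: two_support v_def)
    also have "\<dots> = complex_of_real
        (Re (A $ i $ i) * t^2 - 2 * (cmod w)^2 * t + (cmod w)^2 * Re (A $ j $ j))"
      using assms(2) Im_psd_diag[OF assms(1), of i] Im_psd_diag[OF assms(1), of j]
      unfolding v_def cmod_power2
      by (simp add: complex_eq_iff hji flip: w_def) (simp add: power2_eq_square algebra_simps)
    finally show ?thesis
      using psd_quadratic_form_nonneg[OF assms(1), of v] by simp
  qed
  then have "((cmod w)^2)^2 \<le> Re (A $ i $ i) * ((cmod w)^2 * Re (A $ j $ j))"
    by (intro quadratic_nonneg_imp_discriminant_le Re_psd_diag_nonneg[OF assms(1)])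
  then show ?thesis
    using Re_psd_diag_nonneg[OF assms(1), of i] Re_psd_diag_nonneg[OF assms(1), of j]
    by (cases "w = 0") (auto simp: w_def power2_eq_square mult_ac)
qed

lemma density_inner_self_le_1:
  fixes \<rho> :: "complex^'n::finite^'n"
  assumes "density \<rho>"
  shows "inner \<rho> \<rho> \<le> 1"
proof -
  have psd: "psd \<rho>" and tr: "trace \<rho> = 1"
    using assms by (auto simp: density_def)
  have "inner \<rho> \<rho> = (\<Sum>i\<in>UNIV. \<Sum>j\<in>UNIV. (cmod (\<rho> $ i $ j))^2)"
    by (simp add: inner_vec_def power2_norm_eq_inner)
  also have "\<dots> \<le> (\<Sum>i\<in>UNIV. \<Sum>j\<in>UNIV. Re (\<rho> $ i $ i) * Re (\<rho> $ j $ j))"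
  proof (intro sum_mono)
    fix i j
    show "(cmod (\<rho> $ i $ j))^2 \<le> Re (\<rho> $ i $ i) * Re (\<rho> $ j $ j)"
    proof (cases "i = j")
      case True
      then show ?thesis
        using Im_psd_diag[OF psd, of i] by (simp add: cmod_power2 flip: power2_eq_square)
    qed (rule psd_offdiag_norm_square_le[OF psd])
  qed
  also have "\<dots> = (Re (trace \<rho>))^2"
    by (simp add: trace_def power2_eq_square sum_product)
  finally show ?thesis using tr by simp
qed

lemma inner_self_block_gram_combination:
  fixes f :: "'i \<Rightarrow> 'j \<Rightarrow> 'v::real_inner" and t :: "'i \<Rightarrow> 'j \<Rightarrow> real"
  assumes "finite A" "finite B"
    and gram: "\<And>a b k l. a \<in> A \<Longrightarrow> b \<in> A \<Longrightarrow> k \<in> B \<Longrightarrow> l \<in> B \<Longrightarrow>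
      inner (f a k) (f b l) = (if a = b then if k = l then c else c' else 0)"
    and row_sums: "\<And>a. a \<in> A \<Longrightarrow> (\<Sum>k\<in>B. t a k) = 0"
  defines "Z \<equiv> (\<Sum>a\<in>A. \<Sum>k\<in>B. t a k *\<^sub>R f a k)"
  shows "inner Z Z = (c - c') * (\<Sum>a\<in>A. \<Sum>k\<in>B. (t a k)^2)"
proof -
  have "inner Z Z = (\<Sum>a\<in>A. \<Sum>k\<in>B. t a k * inner (f a k) Z)"
    by (subst (1) Z_def) (simp add: inner_sum_left)
  also have "\<dots> = (\<Sum>a\<in>A. \<Sum>k\<in>B. \<Sum>b\<in>A. \<Sum>l\<in>B. t a k * t b l * inner (f a k) (f b l))"
    by (simp add: Z_def inner_sum_right sum_distrib_left mult.assoc)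
  also have "\<dots> = (\<Sum>a\<in>A. \<Sum>k\<in>B. \<Sum>l\<in>B. t a k * t a l * (if k = l then c else c'))"
  proof (intro sum.cong refl)
    fix a k assume "a \<in> A" "k \<in> B"
    then have "(\<Sum>b\<in>A. \<Sum>l\<in>B. t a k * t b l * inner (f a k) (f b l))
        = (\<Sum>b\<in>A. if b = a then \<Sum>l\<in>B. t a k * t a l * (if k = l then c else c') else 0)"
      by (intro sum.cong refl) (auto simp: gram)
    then show "(\<Sum>b\<in>A. \<Sum>l\<in>B. t a k * t b l * inner (f a k) (f b l))
        = (\<Sum>l\<in>B. t a k * t a l * (if k = l then c else c'))"
      using \<open>a \<in> A\<close> \<open>finite A\<close> by (simp add: sum.delta)
  qed
  also have "\<dots> = (\<Sum>a\<in>A. \<Sum>k\<in>B. (c - c') * (t a k)^2)"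
  proof (rule sum.cong[OF refl])
    fix a assume "a \<in> A"
    have "(\<Sum>k\<in>B. \<Sum>l\<in>B. t a k * t a l * (if k = l then c else c'))
        = (\<Sum>k\<in>B. \<Sum>l\<in>B. t a k * t a l * c' + (if k = l then (c - c') * (t a k)^2 else 0))"
      by (intro sum.cong refl) (auto simp: algebra_simps power2_eq_square)
    also have "\<dots> = (\<Sum>k\<in>B. t a k) * c' * (\<Sum>l\<in>B. t a l) + (\<Sum>k\<in>B. (c - c') * (t a k)^2)"
      using \<open>finite B\<close> by (simp add: sum.distrib sum_distrib_left sum_distrib_right mult_ac)
    finally show "(\<Sum>k\<in>B. \<Sum>l\<in>B. t a k * t a l * (if k = l then c else c'))
        = (\<Sum>k\<in>B. (c - c') * (t a k)^2)"
      using row_sums[OF \<open>a \<in> A\<close>] by simp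
  qed
  finally show ?thesis by (simp add: sum_distrib_left)
qed

lemma bessel_inequality_block_gram:
  fixes f :: "'i \<Rightarrow> 'j \<Rightarrow> 'v::real_inner" and X :: 'v
  assumes "finite A" "finite B"
    and gram: "\<And>a b k l. a \<in> A \<Longrightarrow> b \<in> A \<Longrightarrow> k \<in> B \<Longrightarrow> l \<in> B \<Longrightarrow>
      inner (f a k) (f b l) = (if a = b then if k = l then c else c' else 0)"
    and centred: "\<And>a. a \<in> A \<Longrightarrow> (\<Sum>k\<in>B. f a k) = 0"
    and "c' \<le> c"
  shows "(\<Sum>a\<in>A. \<Sum>k\<in>B. (inner (f a k) X)^2) \<le> (c - c') * inner X X"
proof -
  define T where "T = (\<Sum>a\<in>A. \<Sum>k\<in>B. (inner (f a k) X)^2)"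
  define Z where "Z = (\<Sum>a\<in>A. \<Sum>k\<in>B. inner (f a k) X *\<^sub>R f a k)"
  have "inner Z Z = (c - c') * T"
    unfolding Z_def T_def
  proof (rule inner_self_block_gram_combination[OF assms(1,2) gram])
    show "(\<Sum>k\<in>B. inner (f a k) X) = 0" if "a \<in> A" for a
      using centred[OF that] by (simp flip: inner_sum_left)
  qed
  moreover have "inner Z X = T"
    by (simp add: Z_def T_def inner_sum_left power2_eq_square)
  ultimately have "T * T \<le> T * ((c - c') * inner X X)"
    using Cauchy_Schwarz_ineq[of Z X] by (simp add: power2_eq_square mult_ac)
  moreover have "0 \<le> (c - c') * inner X X"
    using \<open>c' \<le> c\<close> by simp
  ultimately show ?thesis
    unfolding T_def[symmetric] by (cases "T = 0") (auto simp: T_def sum_nonneg mult_le_cancel_left)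
qed

lemma sum_square_eq_sum_square_diff_mean:
  fixes p :: "'a \<Rightarrow> real"
  assumes "finite B" "B \<noteq> {}" "sum p B = 1"
  shows "(\<Sum>k\<in>B. (p k)^2) = (\<Sum>k\<in>B. (p k - 1 / card B)^2) + 1 / card B"
proof -
  have "(\<Sum>k\<in>B. (p k - 1 / card B)^2)
      = (\<Sum>k\<in>B. (p k)^2) - 2 / card B * sum p B + card B * (1 / card B)^2"
    by (simp add: power2_diff sum_subtractf sum.distrib flip: sum_divide_distrib sum_distrib_right sum_distrib_left)
  then show ?thesis
    using assms by (simp add: power2_eq_square)
qed

context
  fixes N M :: nat and x :: real and E :: "nat \<Rightarrow> nat \<Rightarrow> complex^'n::finite^'n"
  assumes povm: "NM_POVM N M x E"
begin

lemma NM_POVM_two_le: "2 \<le> M"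
  using povm by (simp add: NM_POVM_def Let_def)

lemma NM_POVM_sum_eq_mat1: "a < N \<Longrightarrow> (\<Sum>k<M. E a k) = mat 1"
  using povm by (simp add: NM_POVM_def Let_def)

lemma NM_POVM_hermitian: "a < N \<Longrightarrow> k < M \<Longrightarrow> hermitian (E a k)"
  using povm unfolding NM_POVM_def Let_def by (auto intro: psd_imp_hermitian)

lemma NM_POVM_inner_mat1:
  "a < N \<Longrightarrow> k < M \<Longrightarrow> inner (E a k) (mat 1) = real CARD('n) / real M"
  using povm unfolding NM_POVM_def Let_def by (simp add: inner_commute[of _ "mat 1"] inner_mat1_left)

lemma NM_POVM_inner:
  assumes "a < N" "b < N" "k < M" "l < M"
  shows "inner (E a k) (E b l) =
    (if a = b then if k = l then x
       else (real CARD('n) - real M * x) / (real M * (real M - 1))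
     else real CARD('n) / real M ^ 2)"
  using povm assms unfolding NM_POVM_def Let_def
  by (auto simp: hermitian_inner_eq_Re_trace[OF NM_POVM_hermitian[OF assms(1,3)]])

lemma NM_POVM_centred_gram:
  assumes "a < N" "b < N" "k < M" "l < M"
  shows "inner (E a k - (1 / real M) *\<^sub>R mat 1) (E b l - (1 / real M) *\<^sub>R mat 1) =
    (if a = b then if k = l then x - real CARD('n) / real M ^ 2
       else (real CARD('n) - real M * x) / (real M * (real M - 1)) - real CARD('n) / real M ^ 2
     else 0)"
proof -
  have "inner (E a k - (1 / real M) *\<^sub>R mat 1) (E b l - (1 / real M) *\<^sub>R mat 1)
      = inner (E a k) (E b l) - real CARD('n) / real M ^ 2"
    using NM_POVM_inner_mat1[OF assms(1,3)] NM_POVM_inner_mat1[OF assms(2,4)]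
      inner_commute[of "mat 1" "E b l"] inner_mat1_mat1[where 'n = 'n]
    by (simp add: inner_diff_left inner_diff_right power2_eq_square)
  then show ?thesis
    using NM_POVM_inner[OF assms] by simp
qed

lemma NM_POVM_sum_square_diff_mean_le:
  fixes \<rho> :: "complex^'n^'n"
  assumes "density \<rho>"
  shows "(\<Sum>a<N. \<Sum>k<M. (inner (E a k) \<rho> - 1 / real M)^2)
    \<le> (real M ^ 2 * x - real CARD('n)) / (real M * (real M - 1)) * (1 - 1 / real CARD('n))"
proof -
  define d where "d = real CARD('n)"
  define F where "F a k = E a k - (1 / real M) *\<^sub>R mat 1" for a k
  define X where "X = \<rho> - (1 / d) *\<^sub>R mat 1"
  \<comment> \<open>\<open>X\<close> has the same inner products with the centred effects as \<open>\<rho>\<close>,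
    but the smaller squared norm \<open>tr \<rho>\<^sup>2 - 1/d\<close>.\<close>
  define gap where "gap = (real M ^ 2 * x - d) / (real M * (real M - 1))"
  have M2: "real M \<ge> 2"
    using NM_POVM_two_le by simp
  have gap_pos: "0 < gap"
    using povm M2 by (simp add: NM_POVM_def Let_def gap_def d_def field_simps)
  have gap_eq: "(x - d / real M ^ 2) - ((d - real M * x) / (real M * (real M - 1)) - d / real M ^ 2)
      = gap"
    using M2 by (simp add: gap_def field_simps power2_eq_square)
  have "(\<Sum>a<N. \<Sum>k<M. (inner (F a k) X)^2) \<le> gap * inner X X"
    unfolding gap_eq[symmetric]
  proof (rule bessel_inequality_block_gram)
    show "inner (F a k) (F b l) = (if a = b then if k = l then x - d / real M ^ 2
        else (d - real M * x) / (real M * (real M - 1)) - d / real M ^ 2 else 0)"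
      if "a \<in> {..<N}" "b \<in> {..<N}" "k \<in> {..<M}" "l \<in> {..<M}" for a b k l
      using NM_POVM_centred_gram that by (simp add: F_def d_def)
    show "(\<Sum>k<M. F a k) = 0" if "a \<in> {..<N}" for a
      using NM_POVM_sum_eq_mat1 that M2
      by (simp add: F_def sum_subtractf sum_constant_scaleR del: sum_constant)
    show "(d - real M * x) / (real M * (real M - 1)) - d / real M ^ 2 \<le> x - d / real M ^ 2"
      using gap_eq gap_pos by simp
  qed simp_all
  moreover have "inner (F a k) X = inner (E a k) \<rho> - 1 / real M" if "a < N" "k < M" for a k
    using NM_POVM_inner_mat1[OF that] inner_mat1_mat1[where 'n = 'n] density_inner_mat1[OF assms] M2
    by (simp add: F_def X_def d_def inner_diff_left inner_diff_right field_simps)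
  moreover have "inner X X = inner \<rho> \<rho> - 1 / d"
    using inner_mat1_mat1[where 'n = 'n] density_inner_mat1[OF assms] M2
    by (simp add: X_def d_def inner_diff_left inner_diff_right inner_commute[of \<rho> "mat 1"] field_simps)
  ultimately have "(\<Sum>a<N. \<Sum>k<M. (inner (E a k) \<rho> - 1 / real M)^2) \<le> gap * (inner \<rho> \<rho> - 1 / d)"
    by simp
  also have "\<dots> \<le> gap * (1 - 1 / d)"
    using density_inner_self_le_1[OF assms] gap_pos by simp
  finally show ?thesis
    by (simp add: gap_def d_def)
qed

lemma NM_POVM_sum_square_le:
  fixes \<rho> :: "complex^'n^'n"
  assumes "density \<rho>"
  shows "(\<Sum>a<N. \<Sum>k<M. (inner (E a k) \<rho>)^2)
    \<le> (real M ^ 2 * x - real CARD('n)) / (real M * (real M - 1)) * (1 - 1 / real CARD('n))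
       + real N / real M"
proof -
  have "(\<Sum>k<M. (inner (E a k) \<rho>)^2) = (\<Sum>k<M. (inner (E a k) \<rho> - 1 / real M)^2) + 1 / real M"
    if "a < N" for a
    using sum_square_eq_sum_square_diff_mean[of "{..<M}" "\<lambda>k. inner (E a k) \<rho>"]
      NM_POVM_sum_eq_mat1[OF that] density_inner_mat1[OF assms] NM_POVM_two_le
    by (simp add: lessThan_empty_iff flip: inner_sum_left)
  then have "(\<Sum>a<N. \<Sum>k<M. (inner (E a k) \<rho>)^2)
      = (\<Sum>a<N. \<Sum>k<M. (inner (E a k) \<rho> - 1 / real M)^2) + real N / real M"
    by (simp add: sum.distrib)
  then show ?thesis
    using NM_POVM_sum_square_diff_mean_le[OF assms] by simp
qed

end

lemma IC_NM_POVM_sum_square_le: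
  fixes E :: "nat \<Rightarrow> nat \<Rightarrow> complex^'n::finite^'n" and \<rho> :: "complex^'n^'n"
  assumes "IC_NM_POVM N M x E" "density \<rho>"
  shows "(\<Sum>a<N. \<Sum>k<M. (inner (E a k) \<rho>)^2)
    \<le> (real CARD('n) - 1) * (real CARD('n) ^ 2 + real M ^ 2 * x)
       / (real CARD('n) * real M * (real M - 1))"
proof -
  define d where "d = real CARD('n)"
  define D where "D = real M * (real M - 1)"
  have povm: "NM_POVM N M x E" and dim: "N * (M - 1) = CARD('n)^2 - 1"
    using assms(1) by (auto simp: IC_NM_POVM_def)
  have M2: "real M \<ge> 2"
    using NM_POVM_two_le[OF povm] by simp
  have "real (N * (M - 1)) = real (CARD('n)^2 - 1)"
    using dim by simp
  then have "real N * (real M - 1) = d^2 - 1"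
    using M2 by (simp add: d_def of_nat_diff)
  moreover have "real N / real M = real N * (real M - 1) / D"
    using M2 by (simp add: D_def)
  ultimately have N_div: "real N / real M = (d^2 - 1) / D"
    by simp
  have "D \<noteq> 0" "d \<noteq> 0"
    using M2 by (simp_all add: D_def d_def)
  then have "(real M ^ 2 * x - d) / D * (1 - 1 / d) + (d^2 - 1) / D
      = (d - 1) * (d ^ 2 + real M ^ 2 * x) / (d * D)"
    by (simp add: field_simps) (simp add: algebra_simps power2_eq_square)
  then show ?thesis
    using NM_POVM_sum_square_le[OF povm assms(2)] unfolding N_div by (simp add: d_def D_def mult.assoc)
qed

lemma kron_mult:
  fixes A C :: "complex^'a::finite^'a" and B D :: "complex^'b::finite^'b"
  shows "kron A B ** kron C D = kron (A ** C) (B ** D)"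
  by (simp add: vec_eq_iff kron_def matrix_matrix_mult_def sum_product sum.cartesian_product' mult_ac
      flip: UNIV_Times_UNIV)

lemma trace_kron:
  fixes A :: "complex^'a::finite^'a" and B :: "complex^'b::finite^'b"
  shows "trace (kron A B) = trace A * trace B"
  by (simp add: trace_def kron_def sum_product sum.cartesian_product' flip: UNIV_Times_UNIV)

lemma trace_mult_sum_right:
  fixes K :: "complex^'n::finite^'n"
  assumes "finite I"
  shows "trace (K ** sum L I) = (\<Sum>i\<in>I. trace (K ** L i))"
  using assms
proof (induction I rule: finite_induct)
  case empty
  show ?case by (simp add: trace_def matrix_matrix_mult_def)
next
  case (insert i I)
  then show ?case by (simp add: matrix_add_ldistrib trace_add)
qed

lemma trace_mult_scaled_right:
  fixes K L :: "complex^'n::finite^'n"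
  shows "trace (K ** (\<chi> u v. c * L $ u $ v)) = c * trace (K ** L)"
  by (simp add: trace_def matrix_matrix_mult_def sum_distrib_left mult_ac)

lemma Re_trace_kron_mult_mixture:
  fixes A :: "complex^'a::finite^'a" and B :: "complex^'b::finite^'b"
    and \<rho>A :: "'i \<Rightarrow> complex^'a^'a" and \<rho>B :: "'i \<Rightarrow> complex^'b^'b" and p :: "'i \<Rightarrow> real"
  assumes "finite I" "hermitian A" "hermitian B"
    and "\<And>i. i \<in> I \<Longrightarrow> hermitian (\<rho>A i) \<and> hermitian (\<rho>B i)"
  shows "Re (trace (kron A B ** (\<Sum>i\<in>I. \<chi> u v. complex_of_real (p i) * kron (\<rho>A i) (\<rho>B i) $ u $ v)))
    = (\<Sum>i\<in>I. p i * (inner A (\<rho>A i) * inner B (\<rho>B i)))"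
  using assms
  by (simp add: trace_mult_sum_right trace_mult_scaled_right kron_mult trace_kron
      hermitian_trace_mult_eq_inner)

lemma square_convex_combination_le:
  fixes p z :: "'i \<Rightarrow> real"
  assumes "finite I" "\<And>i. i \<in> I \<Longrightarrow> 0 \<le> p i" "sum p I = 1"
  shows "(\<Sum>i\<in>I. p i * z i)^2 \<le> (\<Sum>i\<in>I. p i * (z i)^2)"
  using convex_on_sum[OF assms(1) _ convex_power2 assms(3)] assms by fastforce

lemma sum_square_mixture_le:
  fixes p :: "'i \<Rightarrow> real" and f :: "'i \<Rightarrow> 'x \<Rightarrow> real" and g :: "'i \<Rightarrow> 'y \<Rightarrow> real"
  assumes "finite I" "\<And>i. i \<in> I \<Longrightarrow> 0 \<le> p i" "sum p I = 1"
    and f_bound: "\<And>i. i \<in> I \<Longrightarrow> (\<Sum>x\<in>X. (f i x)^2) \<le> CF"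
    and g_bound: "\<And>i. i \<in> I \<Longrightarrow> (\<Sum>y\<in>Y. (g i y)^2) \<le> CG"
  shows "(\<Sum>x\<in>X. \<Sum>y\<in>Y. (\<Sum>i\<in>I. p i * (f i x * g i y))^2) \<le> CF * CG"
proof -
  have "(\<Sum>x\<in>X. \<Sum>y\<in>Y. (\<Sum>i\<in>I. p i * (f i x * g i y))^2)
      \<le> (\<Sum>x\<in>X. \<Sum>y\<in>Y. \<Sum>i\<in>I. p i * (f i x * g i y)^2)"
    using assms(1-3) by (intro sum_mono square_convex_combination_le)
  also have "\<dots> = (\<Sum>i\<in>I. \<Sum>x\<in>X. \<Sum>y\<in>Y. p i * (f i x * g i y)^2)"
    by (subst sum.swap, rule sum.cong[OF refl], rule sum.swap)
  also have "\<dots> = (\<Sum>i\<in>I. p i * ((\<Sum>x\<in>X. (f i x)^2) * (\<Sum>y\<in>Y. (g i y)^2)))"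
    unfolding sum_product by (simp add: sum_distrib_left power_mult_distrib)
  also have "\<dots> \<le> (\<Sum>i\<in>I. p i * (CF * CG))"
  proof (rule sum_mono)
    fix i assume "i \<in> I"
    have "0 \<le> (\<Sum>x\<in>X. (f i x)^2)" "0 \<le> (\<Sum>y\<in>Y. (g i y)^2)"
      by (simp_all add: sum_nonneg)
    then have "(\<Sum>x\<in>X. (f i x)^2) * (\<Sum>y\<in>Y. (g i y)^2) \<le> CF * CG"
      using f_bound[OF \<open>i \<in> I\<close>] g_bound[OF \<open>i \<in> I\<close>] by (meson mult_mono order_trans)
    then show "p i * ((\<Sum>x\<in>X. (f i x)^2) * (\<Sum>y\<in>Y. (g i y)^2)) \<le> p i * (CF * CG)"
      using assms(2)[OF \<open>i \<in> I\<close>] by (rule mult_left_mono)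
  qed
  also have "\<dots> = CF * CG"
    using assms(3) by (simp flip: sum_distrib_right)
  finally show ?thesis .
qed

lemma separable_sum_square_le:
  fixes A :: "'x \<Rightarrow> complex^'a::finite^'a" and B :: "'y \<Rightarrow> complex^'b::finite^'b"
    and \<rho> :: "complex^('a \<times> 'b)^('a \<times> 'b)"
  assumes "separable \<rho>"
    and "\<And>x. x \<in> X \<Longrightarrow> hermitian (A x)" "\<And>y. y \<in> Y \<Longrightarrow> hermitian (B y)"
    and A_bound: "\<And>\<sigma>. density \<sigma> \<Longrightarrow> (\<Sum>x\<in>X. (inner (A x) \<sigma>)^2) \<le> CA"
    and B_bound: "\<And>\<sigma>. density \<sigma> \<Longrightarrow> (\<Sum>y\<in>Y. (inner (B y) \<sigma>)^2) \<le> CB"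
  shows "(\<Sum>x\<in>X. \<Sum>y\<in>Y. (Re (trace (kron (A x) (B y) ** \<rho>)))^2) \<le> CA * CB"
proof -
  obtain r :: nat and p :: "nat \<Rightarrow> real"
    and \<rho>A :: "nat \<Rightarrow> complex^'a^'a" and \<rho>B :: "nat \<Rightarrow> complex^'b^'b"
    where states: "\<forall>i<r. p i \<ge> 0 \<and> density (\<rho>A i) \<and> density (\<rho>B i)"
    and "(\<Sum>i<r. p i) = 1"
    and \<rho>_eq: "\<rho> = (\<Sum>i<r. \<chi> u v. complex_of_real (p i) * kron (\<rho>A i) (\<rho>B i) $ u $ v)"
    using assms(1) unfolding separable_def by blast
  have states_hermitian: "hermitian (\<rho>A i) \<and> hermitian (\<rho>B i)" if "i \<in> {..<r}" for i
    using states that by (simp add: density_def psd_imp_hermitian)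
  have "Re (trace (kron (A x) (B y) ** \<rho>)) = (\<Sum>i<r. p i * (inner (A x) (\<rho>A i) * inner (B y) (\<rho>B i)))"
    if "x \<in> X" "y \<in> Y" for x y
    unfolding \<rho>_eq using assms(2,3) that states_hermitian by (intro Re_trace_kron_mult_mixture) auto
  then have "(\<Sum>x\<in>X. \<Sum>y\<in>Y. (Re (trace (kron (A x) (B y) ** \<rho>)))^2)
      = (\<Sum>x\<in>X. \<Sum>y\<in>Y. (\<Sum>i<r. p i * (inner (A x) (\<rho>A i) * inner (B y) (\<rho>B i)))^2)"
    by simp
  also have "\<dots> \<le> CA * CB"
    by (rule sum_square_mixture_le) (use states \<open>(\<Sum>i<r. p i) = 1\<close> A_bound B_bound in auto)
  finally show ?thesis .
qed

theorem mainTheorem4: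
  fixes EA :: "nat \<Rightarrow> nat \<Rightarrow> complex^'a^'a"
    and EB :: "nat \<Rightarrow> nat \<Rightarrow> complex^'b^'b"
    and \<rho> :: "complex^('a \<times> 'b)^('a \<times> 'b)"
    and NA MA NB MB :: nat and xA xB :: real
  assumes "IC_NM_POVM NA MA xA EA"
    and "IC_NM_POVM NB MB xB EB"
    and "separable \<rho>"
  shows "(\<Sum>a<NA. \<Sum>k<MA. \<Sum>b<NB. \<Sum>j<MB.
            (Re (trace (kron (EA a k) (EB b j) ** \<rho>))) ^ 2)
         \<le> ((real CARD('a) - 1) * (real CARD('a) ^ 2 + real MA ^ 2 * xA)
              / (real CARD('a) * real MA * (real MA - 1)))
           * ((real CARD('b) - 1) * (real CARD('b) ^ 2 + real MB ^ 2 * xB)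
              / (real CARD('b) * real MB * (real MB - 1)))"
proof -
  have hermitian_EA: "hermitian (EA a k)" if "a < NA" "k < MA" for a k
    using assms(1) that by (auto simp: IC_NM_POVM_def intro: NM_POVM_hermitian)
  have hermitian_EB: "hermitian (EB b j)" if "b < NB" "j < MB" for b j
    using assms(2) that by (auto simp: IC_NM_POVM_def intro: NM_POVM_hermitian)
  have "(\<Sum>a<NA. \<Sum>k<MA. \<Sum>b<NB. \<Sum>j<MB. (Re (trace (kron (EA a k) (EB b j) ** \<rho>)))^2)
      = (\<Sum>ak\<in>{..<NA} \<times> {..<MA}. \<Sum>bj\<in>{..<NB} \<times> {..<MB}.
           (Re (trace (kron (EA (fst ak) (snd ak)) (EB (fst bj) (snd bj)) ** \<rho>)))^2)"
    by (simp add: sum.cartesian_product')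
  then show ?thesis
    by (simp only:) (rule separable_sum_square_le[OF assms(3)],
      auto simp: sum.cartesian_product' hermitian_EA hermitian_EB
        intro: IC_NM_POVM_sum_square_le[OF assms(1)] IC_NM_POVM_sum_square_le[OF assms(2)])
qed

end
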